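(* For every $l\in\mathbb{N}$ and every $a_1,\dots,a_l\in\mathbb{Q}^*$ there exists $d\in\mathbb{Q}^*$ such that $F_d(\mathbb{Q})\not\subseteq\Omega_d$ and $da_j\notin(\mathbb{Q}^* )^2$ for all $j=1,\dots,l$.
   Context: For $d\in\mathbb{Q}^*$, $F_d\subset\mathbb{P}^3_{\mathbb{Q}}$ is the surface $x^4+d^2y^4-d^2z^4-w^4=0$, and $\Omega_d=\{[x:y:z:w]: xyzw=0\}\cup L_d$, where $L_d$ is the union of the $48$ lines (over $\overline{\mathbb{Q}}$) contained in $F_d$. *)

theory Defs
  imports Complex_Main "HOL-Computational_Algebra.Polynomial"
begin

text \<open>Points of affine 4-space (homogeneous coordinates (x,y,z,w) of P^3).\<close>
type_synonym 'a pt4 = "'a \<times> 'a \<times> 'a \<times> 'a"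

definition Fform :: "'a::comm_ring_1 \<Rightarrow> 'a pt4 \<Rightarrow> 'a" where
  "Fform d p = (case p of (x, y, z, w) \<Rightarrow> x^4 + d^2 * y^4 - d^2 * z^4 - w^4)"

definition lincomb4 :: "'a::comm_ring_1 \<Rightarrow> 'a pt4 \<Rightarrow> 'a \<Rightarrow> 'a pt4 \<Rightarrow> 'a pt4" where
  "lincomb4 a u b v = (case u of (u1, u2, u3, u4) \<Rightarrow> case v of (v1, v2, v3, v4) \<Rightarrow>
      (a*u1 + b*v1, a*u2 + b*v2, a*u3 + b*v3, a*u4 + b*v4))"

definition cpt :: "rat pt4 \<Rightarrow> complex pt4" where
  "cpt p = (case p of (x, y, z, w) \<Rightarrow> (of_rat x, of_rat y, of_rat z, of_rat w))"

definition F_rat :: "rat \<Rightarrow> rat pt4 set" where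
  "F_rat d = {p. p \<noteq> (0,0,0,0) \<and> Fform d p = 0}"

text \<open>A line of P^3 over the algebraic closure of Q (realised as the algebraic complex
  numbers) is spanned by two linearly independent vectors u, v with algebraic coordinates;
  it is contained in F_d iff the form vanishes on all of span(u,v).\<close>
definition alg_pt :: "complex pt4 \<Rightarrow> bool" where
  "alg_pt p = (case p of (x, y, z, w) \<Rightarrow> algebraic x \<and> algebraic y \<and> algebraic z \<and> algebraic w)"

definition line_in_F :: "rat \<Rightarrow> complex pt4 \<Rightarrow> complex pt4 \<Rightarrow> bool" where
  "line_in_F d u v \<longleftrightarrow> alg_pt u \<and> alg_pt v \<and>
     (\<forall>a b. lincomb4 a u b v = (0,0,0,0) \<longrightarrow> a = 0 \<and> b = 0) \<and>
     (\<forall>a b. Fform (of_rat d) (lincomb4 a u b v) = 0)"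

text \<open>The exceptional set Omega_d, as a set of (nonzero) rational representatives:
  coordinate hyperplanes xyzw = 0 together with the union L_d of all lines in F_d over Qbar.\<close>
definition Omega_rat :: "rat \<Rightarrow> rat pt4 set" where
  "Omega_rat d = {p. p \<noteq> (0,0,0,0) \<and>
      ((case p of (x, y, z, w) \<Rightarrow> x*y*z*w = 0) \<or>
       (\<exists>u v. line_in_F d u v \<and> (\<exists>a b. cpt p = lincomb4 a u b v)))}"

end

theory Submission
  imports Defs "HOL-Computational_Algebra.Primes"
begin

(* Take d = p (p^4 + 1) for a prime p > 2 dividing no numerator or denominator of the a_j:
   then p divides d a_j exactly once, so d a_j is not a square.  With t = p, the point
   P = (x : y : z : w) = (t^4 + 2t^2 - 1 : 2 : 2t : t^4 - 2t^2 - 1) lies on F_d off the coordinate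
   planes.  A line of F_d through P contains a direction q whose w-coordinate vanishes, so
   s \<mapsto> Fform d (P + s q) is constant; its coefficients of s, s^2, s^3 are weighted power sums
   of the ratios q_i / P_i with weights x^4, d^2 y^4, -d^2 z^4, and these force q = 0 as soon as
   no subsum of the weights vanishes. *)

definition subset_sums_nonzero :: "'a::comm_monoid_add \<Rightarrow> 'a \<Rightarrow> 'a \<Rightarrow> bool" where
  "subset_sums_nonzero e1 e2 e3 \<longleftrightarrow> e1 \<noteq> 0 \<and> e2 \<noteq> 0 \<and> e3 \<noteq> 0 \<and>
     e1 + e2 \<noteq> 0 \<and> e1 + e3 \<noteq> 0 \<and> e2 + e3 \<noteq> 0 \<and> e1 + e2 + e3 \<noteq> 0"

lemma subset_sums_nonzero_of_rat_iff:
  "subset_sums_nonzero (of_rat e1 :: 'a::field_char_0) (of_rat e2) (of_rat e3) \<longleftrightarrow>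
   subset_sums_nonzero e1 e2 e3"
  by (simp add: subset_sums_nonzero_def of_rat_add[symmetric])

lemma weighted_power_sums_two_zero:
  fixes c1 c2 r1 r2 :: "'a::idom"
  assumes "c1 * r1 + c2 * r2 = 0" and "c1 * r1^2 + c2 * r2^2 = 0"
    and "c1 \<noteq> 0" and "c2 \<noteq> 0" and "c1 + c2 \<noteq> 0"
  shows "r1 = 0 \<and> r2 = 0"
proof -
  have "c1 * r1 * (r1 - r2) = (c1 * r1^2 + c2 * r2^2) - r2 * (c1 * r1 + c2 * r2)"
    by (simp add: algebra_simps power2_eq_square)
  then have "r1 = 0 \<or> r1 = r2"
    using assms by simp
  then have "r1 = 0"
    using assms(1,5) by (auto simp: distrib_right[symmetric])
  then show ?thesis
    using assms(1,4) by simp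
qed

lemma weighted_power_sums_three_zero:
  fixes c1 c2 c3 r1 r2 r3 :: "'a::idom"
  assumes S1: "c1 * r1 + c2 * r2 + c3 * r3 = 0"
    and S2: "c1 * r1^2 + c2 * r2^2 + c3 * r3^2 = 0"
    and S3: "c1 * r1^3 + c2 * r2^3 + c3 * r3^3 = 0"
    and nonzero: "subset_sums_nonzero c1 c2 c3"
  shows "r1 = 0 \<and> r2 = 0 \<and> r3 = 0"
proof -
  have "c1 * r1 * (r1 - r2) * (r1 - r3) =
      (c1 * r1^3 + c2 * r2^3 + c3 * r3^3) - (r2 + r3) * (c1 * r1^2 + c2 * r2^2 + c3 * r3^2)
      + r2 * r3 * (c1 * r1 + c2 * r2 + c3 * r3)"
    by (simp add: algebra_simps power2_eq_square power3_eq_cube)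
  then consider "r1 = 0" | "r1 = r2" | "r1 = r3"
    using S1 S2 S3 nonzero by (fastforce simp: subset_sums_nonzero_def)
  then show ?thesis
  proof cases
    case 1
    then show ?thesis
      using weighted_power_sums_two_zero[of c2 r2 c3 r3] S1 S2 nonzero
      unfolding subset_sums_nonzero_def by simp
  next
    case 2
    then have "(c1 + c2) * r1 + c3 * r3 = 0" and "(c1 + c2) * r1^2 + c3 * r3^2 = 0"
      using S1 S2 by (simp_all add: algebra_simps)
    then show ?thesis
      using weighted_power_sums_two_zero[of "c1 + c2" r1 c3 r3] 2 nonzero
      unfolding subset_sums_nonzero_def by (simp add: add.assoc)
  next
    case 3
    then have "(c1 + c3) * r1 + c2 * r2 = 0" and "(c1 + c3) * r1^2 + c2 * r2^2 = 0"
      using S1 S2 by (simp_all add: algebra_simps)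
    then show ?thesis
      using weighted_power_sums_two_zero[of "c1 + c3" r1 c2 r2] 3 nonzero
      unfolding subset_sums_nonzero_def by (simp add: ac_simps)
  qed
qed

lemma quartic_in_parameter_zero:
  fixes a1 a2 a3 a4 :: "'a::{idom, ring_char_0}"
  assumes "\<And>s. a1 * s + a2 * s^2 + a3 * s^3 + a4 * s^4 = 0"
  shows "a1 = 0 \<and> a2 = 0 \<and> a3 = 0 \<and> a4 = 0"
proof -
  have "\<forall>s. poly [:0, a1, a2, a3, a4:] s = 0"
    using assms by (simp add: algebra_simps power2_eq_square power3_eq_cube power4_eq_xxxx)
  then have "[:0, a1, a2, a3, a4:] = 0"
    by (simp only: poly_all_0_iff_0)
  then show ?thesis by simp
qed

lemma quartic_constant_imp_zero:
  fixes e1 e2 e3 r1 r2 r3 :: "'a::{idom, ring_char_0}"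
  assumes const:
      "\<And>s. e1 * (1 + s * r1)^4 + e2 * (1 + s * r2)^4 + e3 * (1 + s * r3)^4 = e1 + e2 + e3"
    and "subset_sums_nonzero e1 e2 e3"
  shows "r1 = 0 \<and> r2 = 0 \<and> r3 = 0"
proof -
  let ?p = "\<lambda>k. e1 * r1^k + e2 * r2^k + e3 * r3^k"
  have "4 * ?p 1 * s + 6 * ?p 2 * s^2 + 4 * ?p 3 * s^3 + ?p 4 * s^4 = 0" for s
    using const[of s] by (simp add: algebra_simps power2_eq_square power3_eq_cube power4_eq_xxxx)
  from quartic_in_parameter_zero[OF this]
  have "?p 1 = 0" "?p 2 = 0" "?p 3 = 0"
    by (simp_all del: distrib_left_numeral)
  then show ?thesis
    using weighted_power_sums_three_zero assms(2) by simp
qed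

lemma line_in_F_horizontal_direction:
  assumes L: "line_in_F d u v" and p: "lincomb4 a u b v = (x, y, z, w)" and "w \<noteq> 0"
  obtains q1 q2 q3 where "(q1, q2, q3) \<noteq> (0, 0, 0)"
    and "\<And>s. Fform (of_rat d) (x + s * q1, y + s * q2, z + s * q3, w) = 0"
proof -
  obtain u1 u2 u3 u4 v1 v2 v3 v4 where uv: "u = (u1, u2, u3, u4)" "v = (v1, v2, v3, v4)"
    by (cases u, cases v) auto
  have indep: "\<And>a b. lincomb4 a u b v = (0, 0, 0, 0) \<Longrightarrow> a = 0 \<and> b = 0"
    and on_F: "\<And>a b. Fform (of_rat d) (lincomb4 a u b v) = 0"
    using L unfolding line_in_F_def by blast+
  define q1 q2 q3 where "q1 = u4 * v1 - v4 * u1" and "q2 = u4 * v2 - v4 * u2"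
    and "q3 = u4 * v3 - v4 * u3"
  have shift:
      "lincomb4 (a - s * v4) u (b + s * u4) v = (x + s * q1, y + s * q2, z + s * q3, w)" for s
    using p unfolding uv lincomb4_def q1_def q2_def q3_def by (auto simp: algebra_simps)
  have "(q1, q2, q3) \<noteq> (0, 0, 0)"
  proof
    assume "(q1, q2, q3) = (0, 0, 0)"
    then have "lincomb4 (- v4) u u4 v = (0, 0, 0, 0)"
      unfolding uv lincomb4_def q1_def q2_def q3_def by (simp add: algebra_simps)
    then have "u4 = 0 \<and> v4 = 0"
      using indep by fastforce
    then show False
      using p \<open>w \<noteq> 0\<close> unfolding uv lincomb4_def by simp
  qed
  moreover have "Fform (of_rat d) (x + s * q1, y + s * q2, z + s * q3, w) = 0" for s
    using on_F[of "a - s * v4" "b + s * u4"] by (simp only: shift)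
  ultimately show thesis using that by blast
qed

lemma not_in_Omega_rat:
  fixes d x y z w :: rat
  assumes "x \<noteq> 0" "y \<noteq> 0" "z \<noteq> 0" "w \<noteq> 0" "d \<noteq> 0"
    and on_F: "Fform d (x, y, z, w) = 0"
    and "x^4 \<noteq> d^2 * z^4" and "y^4 \<noteq> z^4"
  shows "(x, y, z, w) \<notin> Omega_rat d"
proof
  assume "(x, y, z, w) \<in> Omega_rat d"
  then obtain u v a b where L: "line_in_F d u v"
    and "lincomb4 a u b v = (of_rat x, of_rat y, of_rat z, of_rat w)"
    using assms(1-4) unfolding Omega_rat_def cpt_def by auto
  moreover have "(of_rat w :: complex) \<noteq> 0"
    using \<open>w \<noteq> 0\<close> by simp
  ultimately obtain q1 q2 q3 :: complex where "(q1, q2, q3) \<noteq> (0, 0, 0)"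
    and line: "\<And>s. Fform (of_rat d)
      (of_rat x + s * q1, of_rat y + s * q2, of_rat z + s * q3, of_rat w) = 0"
    by (rule line_in_F_horizontal_direction) auto
  define e1 e2 e3 :: complex where "e1 = of_rat (x^4)" and "e2 = of_rat (d^2 * y^4)"
    and "e3 = of_rat (- (d^2 * z^4))"
  define r1 r2 r3 where "r1 = q1 / of_rat x" and "r2 = q2 / of_rat y" and "r3 = q3 / of_rat z"
  have scale: "of_rat x * (1 + s * r1) = of_rat x + s * q1"
    "of_rat y * (1 + s * r2) = of_rat y + s * q2" "of_rat z * (1 + s * r3) = of_rat z + s * q3" for s
    using assms(1-3) by (simp_all add: r1_def r2_def r3_def algebra_simps)
  have expand: "e1 * (1 + s * r1)^4 + e2 * (1 + s * r2)^4 + e3 * (1 + s * r3)^4 - of_rat (w^4)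
      = Fform (of_rat d) (of_rat x + s * q1, of_rat y + s * q2, of_rat z + s * q3, of_rat w)" for s
    unfolding Fform_def e1_def e2_def e3_def
    by (simp add: of_rat_mult of_rat_power of_rat_minus power_mult_distrib mult.assoc
        flip: scale)
  have total: "e1 + e2 + e3 - of_rat (w^4) = of_rat (Fform d (x, y, z, w))"
    unfolding Fform_def e1_def e2_def e3_def
    by (simp add: of_rat_add of_rat_diff of_rat_mult of_rat_power of_rat_minus)
  have "e1 * (1 + s * r1)^4 + e2 * (1 + s * r2)^4 + e3 * (1 + s * r3)^4 = e1 + e2 + e3" for s
    using expand[of s] total line[of s] on_F by simp
  moreover have "subset_sums_nonzero e1 e2 e3"
  proof -
    have "x^4 + d^2 * y^4 > 0"
      using \<open>x \<noteq> 0\<close> by (simp add: add_pos_nonneg)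
    moreover have "x^4 + d^2 * y^4 - d^2 * z^4 = w^4"
      using on_F by (simp add: Fform_def)
    ultimately show ?thesis
      unfolding e1_def e2_def e3_def subset_sums_nonzero_of_rat_iff
      unfolding subset_sums_nonzero_def using assms by (auto simp flip: right_diff_distrib)
  qed
  ultimately have "r1 = 0 \<and> r2 = 0 \<and> r3 = 0"
    by (rule quartic_constant_imp_zero)
  with \<open>(q1, q2, q3) \<noteq> (0, 0, 0)\<close> show False
    using assms(1-3) by (simp add: r1_def r2_def r3_def)
qed

(* x^2 + w^2 = 2 (t^4 + 1)^2 and x^2 - w^2 = 8 t^2 (t^4 - 1), so x^4 - w^4 = d^2 (z^4 - y^4). *)
definition witness_point :: "rat \<Rightarrow> rat pt4" where
  "witness_point t = (t^4 + 2 * t^2 - 1, 2, 2 * t, t^4 - 2 * t^2 - 1)"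

lemma Fform_witness_point: "Fform (t * (t^4 + 1)) (witness_point t) = 0"
  unfolding Fform_def witness_point_def prod.case by algebra

lemma witness_point_in_F_rat_not_Omega_rat:
  fixes t :: rat
  assumes "t \<ge> 3"
  shows "witness_point t \<in> F_rat (t * (t^4 + 1)) - Omega_rat (t * (t^4 + 1))"
proof -
  define x w d where "x = t^4 + 2 * t^2 - 1" and "w = t^4 - 2 * t^2 - 1" and "d = t * (t^4 + 1)"
  have t2: "t^2 \<ge> 9"
    using power_mono[OF assms, of 2] by simp
  have "x^2 - d * (2 * t)^2 = t^6 * (t - 2)^2 + 2 * t^2 * ((t - 1)^2 - 3) + 1"
    unfolding x_def d_def by algebra
  moreover have "(t - 1)^2 \<ge> 4"
    using power_mono[of 2 "t - 1" 2] assms by simp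
  then have "t^2 * ((t - 1)^2 - 3) \<ge> 0"
    by simp
  moreover have "t^6 * (t - 2)^2 \<ge> 0"
    by simp
  ultimately have "d * (2 * t)^2 < x^2"
    by linarith
  moreover have "0 \<le> d * (2 * t)^2"
    unfolding d_def using assms by simp
  ultimately have "(d * (2 * t)^2)^2 < (x^2)^2"
    by (rule power_strict_mono) simp
  then have "x^4 \<noteq> d^2 * (2 * t)^4"
    by (simp add: power_mult_distrib flip: power_mult)
  moreover have t4: "1 < t^4"
    by (rule one_less_power) (use assms in auto)
  then have "(2::rat)^4 \<noteq> (2 * t)^4"
    by simp
  moreover have "t^4 \<ge> 9 * t^2"
    using mult_right_mono[OF t2, of "t^2"] by (simp add: power4_eq_xxxx power2_eq_square)
  then have "x \<noteq> 0" "w \<noteq> 0"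
    unfolding x_def w_def using t2 by linarith+
  moreover have "d \<noteq> 0"
    unfolding d_def using assms t4 by (intro no_zero_divisors) linarith+
  moreover have "Fform d (x, 2, 2 * t, w) = 0"
    using Fform_witness_point[of t] unfolding witness_point_def x_def w_def d_def .
  ultimately have "(x, 2, 2 * t, w) \<notin> Omega_rat d"
    using assms by (intro not_in_Omega_rat) auto
  moreover have "(x, 2, 2 * t, w) \<in> F_rat d"
    unfolding F_rat_def using \<open>Fform d (x, 2, 2 * t, w) = 0\<close> by simp
  ultimately show ?thesis
    unfolding witness_point_def x_def w_def d_def by simp
qed

lemma prime_mult_not_rat_square:
  fixes p :: nat and c :: int and a q :: rat
  assumes p: "prime p" and "\<not> int p dvd c"
    and num: "\<not> int p dvd fst (quotient_of a)" and den: "\<not> int p dvd snd (quotient_of a)"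
  shows "of_nat p * of_int c * a \<noteq> q^2"
proof
  assume eq: "of_nat p * of_int c * a = q^2"
  obtain n m k l where a: "quotient_of a = (n, m)" and q: "quotient_of q = (k, l)"
    by (cases "quotient_of a", cases "quotient_of q") auto
  define P where "P = int p"
  have "prime P"
    using p by (simp add: P_def)
  have "m > 0" "l > 0"
    using quotient_of_denom_pos[OF a] quotient_of_denom_pos[OF q] .
  have "of_int (P * c * n * l^2) = (of_int (k^2 * m) :: rat)"
    using eq \<open>m > 0\<close> \<open>l > 0\<close> unfolding quotient_of_div[OF a] quotient_of_div[OF q] P_def
    by (simp add: field_simps power2_eq_square)
  then have int_eq: "P * c * n * l^2 = k^2 * m"
    by (simp only: of_int_eq_iff)
  have "P dvd k^2 * m"
    by (simp flip: int_eq)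
  then have "P dvd k"
    using \<open>prime P\<close> den a by (simp add: P_def prime_dvd_mult_iff prime_dvd_power_iff)
  then obtain k' where "k = P * k'" ..
  with int_eq \<open>prime P\<close> have "c * n * l^2 = P * (k'^2 * m)"
    by (simp add: power2_eq_square algebra_simps)
  then have "P dvd c * n * l^2"
    by simp
  then have "P dvd l"
    using \<open>prime P\<close> assms(2) num a by (simp add: P_def prime_dvd_mult_iff prime_dvd_power_iff)
  with \<open>P dvd k\<close> \<open>prime P\<close> show False
    using quotient_of_coprime[OF q] by (meson coprime_common_divisor not_prime_unit)
qed

lemma exists_prime_not_dvd:
  fixes S :: "int set" and N :: nat
  assumes "finite S" and "0 \<notin> S"
  obtains p where "prime p" and "p > N" and "\<And>s. s \<in> S \<Longrightarrow> \<not> int p dvd s"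
proof -
  obtain p where "prime p" and p: "p > N + (\<Sum>s\<in>S. nat \<bar>s\<bar>)"
    using bigger_prime by blast
  moreover have "\<not> int p dvd s" if "s \<in> S" for s
  proof
    assume "int p dvd s"
    then have "int p \<le> \<bar>s\<bar>"
      using dvd_imp_le_int[of s "int p"] \<open>0 \<notin> S\<close> \<open>s \<in> S\<close> by force
    moreover have "nat \<bar>s\<bar> \<le> (\<Sum>s\<in>S. nat \<bar>s\<bar>)"
      using \<open>finite S\<close> \<open>s \<in> S\<close> by (intro member_le_sum) auto
    ultimately show False
      using p by linarith
  qed
  ultimately show thesis
    using that by auto
qed

theorem lemma5p5:
  fixes as :: "rat list"
  assumes "\<forall>a\<in>set as. a \<noteq> 0"
  shows "\<exists>d::rat. d \<noteq> 0 \<and> \<not> (F_rat d \<subseteq> Omega_rat d) \<and>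
           (\<forall>a\<in>set as. \<not> (\<exists>q::rat. q \<noteq> 0 \<and> d * a = q^2))"
proof -
  define S where "S = (fst \<circ> quotient_of) ` set as \<union> (snd \<circ> quotient_of) ` set as"
  have "fst (quotient_of a) \<noteq> 0" "snd (quotient_of a) \<noteq> 0" if "a \<in> set as" for a
    using assms that quotient_of_div[OF prod.collapse[symmetric], of a]
      quotient_of_denom_pos'[of a] by auto
  then have "0 \<notin> S"
    unfolding S_def by auto
  then obtain p where "prime p" and "p > 2" and p_not_dvd_S: "\<And>s. s \<in> S \<Longrightarrow> \<not> int p dvd s"
    using exists_prime_not_dvd[of S 2] unfolding S_def by blast
  define t where "t = (of_nat p :: rat)"
  have "t \<ge> 3"
    using \<open>p > 2\<close> unfolding t_def by simp
  have "\<not> int p dvd int p^4 + 1"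
    using \<open>p > 2\<close> by (simp add: dvd_add_right_iff)
  have "t * (t^4 + 1) * a \<noteq> q^2" if "a \<in> set as" for a q
  proof -
    have "\<not> int p dvd fst (quotient_of a)" "\<not> int p dvd snd (quotient_of a)"
      using p_not_dvd_S that unfolding S_def by auto
    from prime_mult_not_rat_square[OF \<open>prime p\<close> \<open>\<not> int p dvd int p^4 + 1\<close> this]
    show ?thesis
      unfolding t_def by simp
  qed
  moreover have "t * (t^4 + 1) \<noteq> 0"
    using \<open>t \<ge> 3\<close> zero_le_power[of t 4] by (intro no_zero_divisors) linarith+
  moreover have "\<not> (F_rat (t * (t^4 + 1)) \<subseteq> Omega_rat (t * (t^4 + 1)))"
    using witness_point_in_F_rat_not_Omega_rat[OF \<open>t \<ge> 3\<close>] by blast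
  ultimately show ?thesis
    by blast
qed

end
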